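(* Let $A\in\mathbb{R}^{n\times m}$ with $n\ge 2$ be such that the DSR graph $G_{A,A^t}$ is steady. (i) If each column of $A$ has at most two nonzero entries, then for every $B\in\mathcal{Q}_0(A^t)$, both $AB$ and $(AB)^{[2]}$ are $P_0$-matrices, and $AB$ is positive semistable. (ii) If each row of $A$ has at most two nonzero entries, then for every $B\in\mathcal{Q}_0(A^t)$, $AB$ is positive semistable.
   Context: For $M\in\mathbb{R}^{n\times m}$, $\mathcal{Q}(M)$ is the set of matrices with the same entrywise sign pattern as $M$, and $\mathcal{Q}_0(M)$ its closure. A square real matrix is a $P_0$-matrix if all principal minors are nonnegative; it is positive semistable if all its eigenvalues have nonnegative real part. For $M\in\mathbb{R}^{n\times n}$, $M^{[2]}$ is the second additive compound: the matrix of $u\wedge v\mapsto Mu\wedge v+u\wedge Mv$ on $\Lambda^2\mathbb{R}^n$ in the lexicographically ordered basis $e_i\wedge e_j$, $i<j$. DSR graphs: for $A\in\mathbb{R}^{n\times m}$, $B\in\mathbb{R}^{m\times n}$, $G_{A,B}$ is the signed, labelled bipartite digraph with S-vertices $S_1,\dots,S_n$ and R-vertices $R_1,\dots,R_m$, having an arc $R_j\to S_i$ of sign $\mathrm{sign}(A_{ij})$ iff $A_{ij}\ne0$, and an arc $S_i\to R_j$ of sign $\mathrm{sign}(B_{ji})$ iff $B_{ji}\ne0$. Antiparallel arcs between the same pair of vertices with the same sign are regarded as a single undirected edge. An edge arising from $A_{ij}\ne0$ (R-to-S or undirected) has label $|A_{ij}|$; an edge with only S-to-R orientation has label $\infty$.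 A cycle is a nonempty closed walk (traversing edges consistently with their orientations) repeating no vertex except first$=$last. A cycle $(e_1,\dots,e_{2r})$ is an s-cycle if all labels are finite and $\prod_{i=1}^r l(e_{2i-1})=\prod_{i=1}^r l(e_{2i})$. A DSR graph is steady if all of its cycles are s-cycles. *)

theory Defs
  imports Complex_Main "Jordan_Normal_Form.Jordan_Normal_Form" "Jordan_Normal_Form.DL_Submatrix"
begin

definition Q0 :: "real mat \<Rightarrow> real mat set" where
  "Q0 M = {B. B \<in> carrier_mat (dim_row M) (dim_col M) \<and>
     (\<forall>i<dim_row M. \<forall>j<dim_col M. B $$ (i,j) = 0 \<or> sgn (B $$ (i,j)) = sgn (M $$ (i,j)))}"

definition P0_matrix :: "real mat \<Rightarrow> bool" where
  "P0_matrix M \<longleftrightarrow> square_mat M \<and>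
     (\<forall>I. I \<subseteq> {0..<dim_row M} \<and> I \<noteq> {} \<longrightarrow> det (submatrix M I I) \<ge> 0)"

definition positive_semistable :: "real mat \<Rightarrow> bool" where
  "positive_semistable M \<longleftrightarrow> square_mat M \<and>
     (\<forall>z. eigenvalue (map_mat complex_of_real M) z \<longrightarrow> Re z \<ge> 0)"

text \<open>Lexicographically ordered index pairs (i,j), i<j<n, of the basis e_i \<and> e_j.\<close>
definition wedge_pairs :: "nat \<Rightarrow> (nat \<times> nat) list" where
  "wedge_pairs n = concat (map (\<lambda>i. map (\<lambda>j. (i,j)) [Suc i..<n]) [0..<n])"

text \<open>Coefficient of e_i \<and> e_j in M e_k \<and> e_l + e_k \<and> M e_l (i<j, k<l).\<close>
definition compound2_entry :: "real mat \<Rightarrow> nat \<times> nat \<Rightarrow> nat \<times> nat \<Rightarrow> real" where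
  "compound2_entry M ij kl = (case ij of (i,j) \<Rightarrow> case kl of (k,l) \<Rightarrow>
      (if l = j then M $$ (i,k) else 0) - (if l = i then M $$ (j,k) else 0)
    + (if k = i then M $$ (j,l) else 0) - (if k = j then M $$ (i,l) else 0))"

definition compound2 :: "real mat \<Rightarrow> real mat" where
  "compound2 M = (let ps = wedge_pairs (dim_row M) in
     mat (length ps) (length ps) (\<lambda>(a,b). compound2_entry M (ps ! a) (ps ! b)))"

datatype dsr_vertex = SV nat | RV nat

text \<open>Edges between S_i and R_j: undirected (antiparallel arcs of equal sign),
  arc R_j -> S_i, or arc S_i -> R_j.\<close>
datatype dsr_edge = Und nat nat | RS nat nat | SR nat nat

definition dsr_edges :: "real mat \<Rightarrow> real mat \<Rightarrow> dsr_edge set" where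
  "dsr_edges A B =
     {Und i j | i j. i < dim_row A \<and> j < dim_col A \<and> A $$ (i,j) \<noteq> 0 \<and> B $$ (j,i) \<noteq> 0
                     \<and> sgn (A $$ (i,j)) = sgn (B $$ (j,i))}
   \<union> {RS i j | i j. i < dim_row A \<and> j < dim_col A \<and> A $$ (i,j) \<noteq> 0
                     \<and> \<not> (B $$ (j,i) \<noteq> 0 \<and> sgn (A $$ (i,j)) = sgn (B $$ (j,i)))}
   \<union> {SR i j | i j. i < dim_row A \<and> j < dim_col A \<and> B $$ (j,i) \<noteq> 0
                     \<and> \<not> (A $$ (i,j) \<noteq> 0 \<and> sgn (A $$ (i,j)) = sgn (B $$ (j,i)))}"

definition dsr_sign :: "real mat \<Rightarrow> real mat \<Rightarrow> dsr_edge \<Rightarrow> real" where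
  "dsr_sign A B e = (case e of Und i j \<Rightarrow> sgn (A $$ (i,j)) | RS i j \<Rightarrow> sgn (A $$ (i,j))
                      | SR i j \<Rightarrow> sgn (B $$ (j,i)))"

text \<open>Labels: None stands for the label \<infinity>.\<close>
definition dsr_label :: "real mat \<Rightarrow> dsr_edge \<Rightarrow> real option" where
  "dsr_label A e = (case e of Und i j \<Rightarrow> Some \<bar>A $$ (i,j)\<bar> | RS i j \<Rightarrow> Some \<bar>A $$ (i,j)\<bar>
                      | SR i j \<Rightarrow> None)"

definition traverses :: "dsr_edge \<Rightarrow> dsr_vertex \<Rightarrow> dsr_vertex \<Rightarrow> bool" where
  "traverses e u v = (case e of
      Und i j \<Rightarrow> (u = SV i \<and> v = RV j) \<or> (u = RV j \<and> v = SV i)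
    | RS i j \<Rightarrow> u = RV j \<and> v = SV i
    | SR i j \<Rightarrow> u = SV i \<and> v = RV j)"

definition dsr_cycle :: "real mat \<Rightarrow> real mat \<Rightarrow> dsr_vertex list \<Rightarrow> dsr_edge list \<Rightarrow> bool" where
  "dsr_cycle A B vs es \<longleftrightarrow> length es = length vs \<and> vs \<noteq> [] \<and> distinct vs \<and> distinct es \<and>
     set es \<subseteq> dsr_edges A B \<and>
     (\<forall>k < length es. traverses (es ! k) (vs ! k) (vs ! (Suc k mod length vs)))"

text \<open>s-cycle: all labels finite and product of labels of e_1,e_3,... (0-based even
  positions) equals product of labels of e_2,e_4,... (0-based odd positions).\<close>
definition s_cycle :: "real mat \<Rightarrow> dsr_edge list \<Rightarrow> bool" where
  "s_cycle A es \<longleftrightarrow> (\<forall>e \<in> set es. dsr_label A e \<noteq> None) \<and>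
     (\<Prod>k \<in> {k. k < length es \<and> even k}. the (dsr_label A (es ! k)))
   = (\<Prod>k \<in> {k. k < length es \<and> odd k}. the (dsr_label A (es ! k)))"

definition steady :: "real mat \<Rightarrow> real mat \<Rightarrow> bool" where
  "steady A B \<longleftrightarrow> (\<forall>vs es. dsr_cycle A B vs es \<longrightarrow> s_cycle A es)"

end

(*
  Everything rests on diagonal dominance with positive weights. If each column of A has at most
  two nonzero entries and G_{A,A^T} is steady, the rows of A can be rescaled by positive weights
  w so that in every column the two nonzero entries have equal magnitude: the cycle condition of
  steadiness is exactly the consistency condition for solving these ratio equations along the
  graph whose vertices are rows and whose edges are columns. For B in Q_0(A^T) the sign pattern
  makes every diagonal term A_kj B_jk nonnegative, and the balancing turns this into weighted
  column dominance of AB, which is inherited by (AB)^[2] with the product weights w_k w_l.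
  Weighted dominance gives nonnegative principal minors (a real negative eigenvalue would leave
  the Gershgorin discs, all of which lie in the closed right half plane) and positive
  semistability. For sparse rows the same argument applies to A^T and B^T, giving dominance
  of BA, whose nonzero eigenvalues are those of AB.
*)
theory Submission
  imports Defs
begin

section \<open>Weighted diagonal dominance\<close>

definition weighted_diag_dominant :: "real mat \<Rightarrow> nat \<Rightarrow> (nat \<Rightarrow> real) \<Rightarrow> bool" where
  "weighted_diag_dominant R n w \<longleftrightarrow> R \<in> carrier_mat n n \<and> (\<forall>i<n. w i > 0) \<and>
     (\<forall>i<n. (\<Sum>k\<in>{0..<n}-{i}. w k * \<bar>R $$ (i,k)\<bar>) \<le> w i * R $$ (i,i))"

lemma weighted_diag_dominant_diag_nonneg:
  assumes "weighted_diag_dominant R n w" "i < n"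
  shows "R $$ (i,i) \<ge> 0"
proof -
  have "0 \<le> (\<Sum>k\<in>{0..<n}-{i}. w k * \<bar>R $$ (i,k)\<bar>)"
    using assms unfolding weighted_diag_dominant_def by (intro sum_nonneg) (simp add: less_imp_le)
  also have "\<dots> \<le> w i * R $$ (i,i)"
    using assms unfolding weighted_diag_dominant_def by auto
  finally have "0 \<le> w i * R $$ (i,i)" .
  moreover have "w i > 0"
    using assms unfolding weighted_diag_dominant_def by auto
  ultimately show ?thesis by (simp add: zero_le_mult_iff)
qed

lemma exists_max_weighted_component:
  fixes v :: "'a::real_normed_field vec"
  assumes "v \<in> carrier_vec n" "v \<noteq> 0\<^sub>v n" "\<forall>k<n. w k > 0"
  obtains i where "i < n" "v $ i \<noteq> 0" "\<And>k. k < n \<Longrightarrow> norm (v $ k) / w k \<le> norm (v $ i) / w i"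
proof -
  have "\<exists>i0<n. v $ i0 \<noteq> 0"
  proof (rule ccontr)
    assume "\<not> ?thesis"
    then have "v = 0\<^sub>v n" using assms(1) by (intro eq_vecI) auto
    with assms(2) show False by simp
  qed
  then obtain i0 where "i0 < n" "v $ i0 \<noteq> 0" by blast
  define f where "f k = norm (v $ k) / w k" for k
  have "Max (f ` {0..<n}) \<in> f ` {0..<n}"
    using \<open>i0 < n\<close> by (intro Max_in) auto
  then obtain i where i: "i < n" "Max (f ` {0..<n}) = f i" by auto
  have imax: "f k \<le> f i" if "k < n" for k
    using i(2) that by (metis Max_ge atLeastLessThan_iff finite_atLeastLessThan finite_imageI image_eqI zero_le)
  have "0 < f i0"
    using \<open>i0 < n\<close> \<open>v $ i0 \<noteq> 0\<close> assms(3) by (simp add: f_def)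
  also have "\<dots> \<le> f i" using imax \<open>i0 < n\<close> .
  finally have "v $ i \<noteq> 0" by (auto simp: f_def)
  with i imax that show ?thesis unfolding f_def by blast
qed

lemma weighted_diag_dominant_eigenvalue_disc:
  fixes z :: "'a::real_normed_field"
  assumes dom: "weighted_diag_dominant R n w" and ev: "eigenvalue (map_mat of_real R) z"
  shows "\<exists>i<n. norm (z - of_real (R $$ (i,i))) \<le> R $$ (i,i)"
proof -
  have R: "R \<in> carrier_mat n n" and wpos: "\<And>i. i < n \<Longrightarrow> w i > 0"
    and dd: "\<And>i. i < n \<Longrightarrow> (\<Sum>k\<in>{0..<n}-{i}. w k * \<bar>R $$ (i,k)\<bar>) \<le> w i * R $$ (i,i)"
    using dom unfolding weighted_diag_dominant_def by auto
  from ev obtain v where v: "v \<in> carrier_vec n" "v \<noteq> 0\<^sub>v n"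
    and eq: "map_mat of_real R *\<^sub>v v = z \<cdot>\<^sub>v v"
    using R unfolding eigenvalue_def eigenvector_def by auto
  obtain i where i: "i < n" "v $ i \<noteq> 0"
    and imax: "\<And>k. k < n \<Longrightarrow> norm (v $ k) / w k \<le> norm (v $ i) / w i"
    using exists_max_weighted_component[OF v] dom unfolding weighted_diag_dominant_def by blast
  have "(\<Sum>k\<in>{0..<n}. of_real (R $$ (i,k)) * v $ k) = z * v $ i"
    using arg_cong[OF eq, of "\<lambda>u. u $ i"] R v(1) i(1) by (simp add: scalar_prod_def)
  moreover have "(\<Sum>k\<in>{0..<n}. of_real (R $$ (i,k)) * v $ k)
      = of_real (R $$ (i,i)) * v $ i + (\<Sum>k\<in>{0..<n}-{i}. of_real (R $$ (i,k)) * v $ k)"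
    using i(1) by (subst sum.remove[of _ i]) auto
  ultimately have "(z - of_real (R $$ (i,i))) * v $ i = (\<Sum>k\<in>{0..<n}-{i}. of_real (R $$ (i,k)) * v $ k)"
    by (simp add: algebra_simps)
  then have "norm (z - of_real (R $$ (i,i))) * norm (v $ i)
      = norm (\<Sum>k\<in>{0..<n}-{i}. of_real (R $$ (i,k)) * v $ k)"
    by (metis norm_mult)
  also have "\<dots> \<le> (\<Sum>k\<in>{0..<n}-{i}. \<bar>R $$ (i,k)\<bar> * norm (v $ k))"
    by (rule order_trans[OF norm_sum]) (simp add: norm_mult)
  also have "\<dots> \<le> (\<Sum>k\<in>{0..<n}-{i}. w k * \<bar>R $$ (i,k)\<bar> * (norm (v $ i) / w i))"
  proof (rule sum_mono)
    fix k assume "k \<in> {0..<n}-{i}"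
    then have k: "k < n" by auto
    have "norm (v $ k) \<le> w k * (norm (v $ i) / w i)"
      using imax[OF k] wpos[OF k] by (simp add: field_simps)
    then have "\<bar>R $$ (i,k)\<bar> * norm (v $ k) \<le> \<bar>R $$ (i,k)\<bar> * (w k * (norm (v $ i) / w i))"
      by (rule mult_left_mono) simp
    then show "\<bar>R $$ (i,k)\<bar> * norm (v $ k) \<le> w k * \<bar>R $$ (i,k)\<bar> * (norm (v $ i) / w i)"
      by (simp only: ac_simps)
  qed
  also have "\<dots> = (\<Sum>k\<in>{0..<n}-{i}. w k * \<bar>R $$ (i,k)\<bar>) * (norm (v $ i) / w i)"
    by (rule sum_distrib_right[symmetric])
  also have "\<dots> \<le> w i * R $$ (i,i) * (norm (v $ i) / w i)"
    using dd[OF i(1)] wpos[OF i(1)] by (intro mult_right_mono) auto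
  also have "\<dots> = R $$ (i,i) * norm (v $ i)"
    using wpos[OF i(1)] by simp
  finally show ?thesis
    using i by (intro exI[of _ i]) simp
qed

lemma weighted_diag_dominant_Re_eigenvalue_nonneg:
  assumes "weighted_diag_dominant R n w" "eigenvalue (map_mat complex_of_real R) z"
  shows "Re z \<ge> 0"
proof -
  obtain i where "i < n" "cmod (z - of_real (R $$ (i,i))) \<le> R $$ (i,i)"
    using weighted_diag_dominant_eigenvalue_disc[OF assms] by blast
  moreover have "\<bar>Re z - R $$ (i,i)\<bar> \<le> cmod (z - of_real (R $$ (i,i)))"
    by (metis Re_complex_of_real abs_Re_le_cmod minus_complex.simps(1))
  ultimately show ?thesis by linarith
qed

text \<open>A negative determinant would give the characteristic polynomial of \<open>-R\<close> a
  positive root \<open>t\<close>, i.e. a real eigenvalue \<open>-t < 0\<close> of \<open>R\<close>, outside every disc.\<close>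
lemma weighted_diag_dominant_det_nonneg:
  assumes dom: "weighted_diag_dominant R n w"
  shows "det R \<ge> 0"
proof (rule ccontr)
  assume neg: "\<not> det R \<ge> 0"
  have R: "R \<in> carrier_mat n n" using dom unfolding weighted_diag_dominant_def by auto
  then have mR: "-R \<in> carrier_mat n n" by simp
  define q where "q = char_poly (-R)"
  have "- char_matrix (-R) 0 = R" using R unfolding char_matrix_def by (intro eq_matI) auto
  then have q0: "poly q 0 = det R" unfolding q_def by (simp add: char_poly_matrix[OF mR])
  have "lead_coeff q = 1" using degree_monic_char_poly[OF mR] unfolding q_def by simp
  then obtain N where N: "\<forall>x\<ge>N. poly q x \<ge> 1" using poly_pinfty_gt_lc[of q] by auto
  have "poly q (max N 1) \<ge> 1" using N by auto
  then obtain t where t: "0 < t" "poly q t = 0"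
    using q0 neg poly_IVT_pos[of 0 "max N 1" q] by force
  have "eigenvalue (-R) t"
    using eigenvalue_root_char_poly[OF mR] t(2) unfolding q_def by simp
  then obtain v where v: "v \<in> carrier_vec n" "v \<noteq> 0\<^sub>v n" "(-R) *\<^sub>v v = t \<cdot>\<^sub>v v"
    using mR unfolding eigenvalue_def eigenvector_def by auto
  have "R *\<^sub>v v = (-t) \<cdot>\<^sub>v v"
  proof -
    have "(-R) *\<^sub>v v = - (R *\<^sub>v v)" using R v(1) by (simp add: uminus_mult_mat_vec)
    with v(3) have "R *\<^sub>v v = - (t \<cdot>\<^sub>v v)" by (metis uminus_uminus_vec)
    then show ?thesis by auto
  qed
  moreover have "map_mat (of_real :: real \<Rightarrow> real) R = R" by (intro eq_matI) auto
  ultimately have "eigenvalue (map_mat (of_real :: real \<Rightarrow> real) R) (-t)"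
    using v R unfolding eigenvalue_def eigenvector_def by auto
  from weighted_diag_dominant_eigenvalue_disc[OF dom this]
  obtain i where "i < n" "norm (-t - R $$ (i,i)) \<le> R $$ (i,i)" by auto
  with weighted_diag_dominant_diag_nonneg[OF dom] t(1) show False by force
qed

lemma inj_on_pick: "inj_on (pick I) {0..<card I}"
proof (rule linorder_inj_onI)
  fix a b assume "a < b" "b \<in> {0..<card I}"
  then show "pick I a \<noteq> pick I b" using pick_mono[of b I a] by simp
qed auto

lemma submatrix_principal:
  assumes R: "R \<in> carrier_mat n n" and I: "I \<subseteq> {0..<n}"
  shows "submatrix R I I \<in> carrier_mat (card I) (card I)"
    and "\<And>a b. a < card I \<Longrightarrow> b < card I \<Longrightarrow> submatrix R I I $$ (a,b) = R $$ (pick I a, pick I b)"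
    and "\<And>a. a < card I \<Longrightarrow> pick I a \<in> I"
proof -
  have "{i. i < n \<and> i \<in> I} = I" using I by auto
  then have card: "card {i. i < dim_row R \<and> i \<in> I} = card I" "card {i. i < dim_col R \<and> i \<in> I} = card I"
    using R by auto
  show "submatrix R I I \<in> carrier_mat (card I) (card I)"
    by (rule carrier_matI) (simp_all only: dim_submatrix card)
  show "submatrix R I I $$ (a,b) = R $$ (pick I a, pick I b)" if "a < card I" "b < card I" for a b
    by (rule submatrix_index) (simp_all only: card that)
  show "pick I a \<in> I" if "a < card I" for a
    using that by (rule pick_in_set[OF disjI1])
qed

lemma weighted_diag_dominant_submatrix:
  assumes dom: "weighted_diag_dominant R n w" and I: "I \<subseteq> {0..<n}"
  shows "weighted_diag_dominant (submatrix R I I) (card I) (w \<circ> pick I)"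
proof -
  have R: "R \<in> carrier_mat n n" and wpos: "\<forall>i<n. w i > 0"
    and dd: "\<And>i. i<n \<Longrightarrow> (\<Sum>k\<in>{0..<n}-{i}. w k * \<bar>R $$ (i,k)\<bar>) \<le> w i * R $$ (i,i)"
    using dom unfolding weighted_diag_dominant_def by auto
  note S = submatrix_principal[OF R I]
  have pick_lt: "pick I a < n" if "a < card I" for a using S(3)[OF that] I by auto
  have "(\<Sum>a\<in>{0..<card I}-{b}. (w \<circ> pick I) a * \<bar>submatrix R I I $$ (b,a)\<bar>)
      \<le> (w \<circ> pick I) b * submatrix R I I $$ (b,b)" if b: "b < card I" for b
  proof -
    have inj: "inj_on (pick I) ({0..<card I}-{b})"
      using inj_on_pick by (rule inj_on_subset) blast
    have "pick I ` ({0..<card I}-{b}) \<subseteq> {0..<n}-{pick I b}"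
      using inj_onD[OF inj_on_pick[of I]] b pick_lt by fastforce
    then have "(\<Sum>k\<in>pick I ` ({0..<card I}-{b}). w k * \<bar>R $$ (pick I b, k)\<bar>)
        \<le> (\<Sum>k\<in>{0..<n}-{pick I b}. w k * \<bar>R $$ (pick I b, k)\<bar>)"
      using wpos by (intro sum_mono2) (auto simp: less_imp_le)
    also have "\<dots> \<le> w (pick I b) * R $$ (pick I b, pick I b)" using dd[OF pick_lt[OF b]] .
    finally show ?thesis
      using b by (simp add: S(2) sum.reindex[OF inj])
  qed
  then show ?thesis
    unfolding weighted_diag_dominant_def using S(1) wpos pick_lt by auto
qed

lemma transpose_submatrix:
  assumes M: "M \<in> carrier_mat n n" and I: "I \<subseteq> {0..<n}"
  shows "transpose_mat (submatrix M I I) = submatrix (transpose_mat M) I I"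
proof -
  have Mt: "transpose_mat M \<in> carrier_mat n n" using M by simp
  note S = submatrix_principal[OF M I] and St = submatrix_principal[OF Mt I]
  have "pick I a < n" if "a < card I" for a using S(3)[OF that] I by auto
  then show ?thesis
    using S(1,2) St(1,2) M by (intro eq_matI) auto
qed

lemma P0_matrix_if_weighted_diag_dominant:
  assumes dom: "weighted_diag_dominant M n w"
  shows "P0_matrix M"
  unfolding P0_matrix_def
proof (intro conjI allI impI)
  have M: "M \<in> carrier_mat n n" using dom unfolding weighted_diag_dominant_def by simp
  then show "square_mat M" by simp
  fix I assume "I \<subseteq> {0..<dim_row M} \<and> I \<noteq> {}"
  then have "I \<subseteq> {0..<n}" using M by simp
  then show "det (submatrix M I I) \<ge> 0"
    by (rule weighted_diag_dominant_det_nonneg[OF weighted_diag_dominant_submatrix[OF dom]])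
qed

lemma P0_matrix_transpose:
  assumes M: "M \<in> carrier_mat n n" and P0: "P0_matrix (transpose_mat M)"
  shows "P0_matrix M"
  unfolding P0_matrix_def
proof (intro conjI allI impI)
  show "square_mat M" using M by simp
  fix I assume "I \<subseteq> {0..<dim_row M} \<and> I \<noteq> {}"
  moreover have I: "I \<subseteq> {0..<n}" using calculation M by simp
  ultimately have "det (submatrix (transpose_mat M) I I) \<ge> 0"
    using P0 M unfolding P0_matrix_def by simp
  then show "det (submatrix M I I) \<ge> 0"
    using det_transpose[OF submatrix_principal(1)[OF M I]] transpose_submatrix[OF M I] by simp
qed

lemma eigenvalue_transpose_of_real:
  assumes M: "M \<in> carrier_mat n n" and ev: "eigenvalue (map_mat complex_of_real M) z"
  shows "eigenvalue (map_mat complex_of_real (transpose_mat M)) z"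
proof -
  have Mc: "map_mat complex_of_real M \<in> carrier_mat n n" using M by simp
  have Mtc: "map_mat complex_of_real (transpose_mat M) \<in> carrier_mat n n" using M by simp
  have "transpose_mat (map_mat complex_of_real M) = map_mat complex_of_real (transpose_mat M)"
    by (intro eq_matI) auto
  then have "char_poly (map_mat complex_of_real (transpose_mat M)) = char_poly (map_mat complex_of_real M)"
    using char_poly_transpose_mat[OF Mc] by simp
  then show ?thesis
    using ev unfolding eigenvalue_root_char_poly[OF Mc] eigenvalue_root_char_poly[OF Mtc] by simp
qed

lemma positive_semistable_if_weighted_diag_dominant:
  assumes dom: "weighted_diag_dominant M n w"
  shows "positive_semistable M"
  unfolding positive_semistable_def
  using dom weighted_diag_dominant_Re_eigenvalue_nonneg[OF dom]
  unfolding weighted_diag_dominant_def by auto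

lemma positive_semistable_transpose:
  assumes M: "M \<in> carrier_mat n n" and st: "positive_semistable (transpose_mat M)"
  shows "positive_semistable M"
  using M st eigenvalue_transpose_of_real[OF M] unfolding positive_semistable_def by simp

section \<open>Products with a sparse column pattern\<close>

lemma card_le_two_cases:
  assumes "finite S" "card S \<le> 2" "i \<in> S" "k \<in> S" "i \<noteq> k" "a \<in> S"
  shows "a = i \<or> a = k"
proof (rule ccontr)
  assume "\<not> (a = i \<or> a = k)"
  then have "card {i, k, a} = 3" using assms(5) by auto
  moreover have "card {i, k, a} \<le> card S" using assms by (intro card_mono) auto
  ultimately show False using assms(2) by simp
qed

definition column_balancing :: "real mat \<Rightarrow> (nat \<Rightarrow> real) \<Rightarrow> nat set \<Rightarrow> bool" where
  "column_balancing A w J \<longleftrightarrow> (\<forall>c\<in>J. \<forall>a<dim_row A. \<forall>b<dim_row A.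
     A $$ (a,c) \<noteq> 0 \<longrightarrow> A $$ (b,c) \<noteq> 0 \<longrightarrow> w a * \<bar>A $$ (a,c)\<bar> = w b * \<bar>A $$ (b,c)\<bar>)"

lemma column_balancingD:
  assumes "column_balancing A w J" "c \<in> J" "a < dim_row A" "b < dim_row A"
    "A $$ (a,c) \<noteq> 0" "A $$ (b,c) \<noteq> 0"
  shows "w a * \<bar>A $$ (a,c)\<bar> = w b * \<bar>A $$ (b,c)\<bar>"
  using assms unfolding column_balancing_def by blast

lemma balanced_column_off_sum_le:
  fixes w :: "nat \<Rightarrow> real"
  assumes A: "A \<in> carrier_mat n m" and j: "j \<in> J" and k: "k < n"
    and two: "card {i. i < n \<and> A $$ (i,j) \<noteq> 0} \<le> 2"
    and bal: "column_balancing A w J" and Akj: "A $$ (k,j) \<noteq> 0" and wk: "w k \<ge> 0"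
  shows "(\<Sum>i\<in>{0..<n}-{k}. w i * \<bar>A $$ (i,j)\<bar>) \<le> w k * \<bar>A $$ (k,j)\<bar>"
proof (cases "\<exists>i<n. i \<noteq> k \<and> A $$ (i,j) \<noteq> 0")
  case False
  then have "(\<Sum>i\<in>{0..<n}-{k}. w i * \<bar>A $$ (i,j)\<bar>) = 0" by (intro sum.neutral) auto
  then show ?thesis using wk by simp
next
  case True
  then obtain i where i: "i < n" "i \<noteq> k" "A $$ (i,j) \<noteq> 0" by blast
  have "A $$ (a,j) = 0" if "a \<in> {0..<n}-{k,i}" for a
    using card_le_two_cases[OF _ two, of k i a] that i k Akj by auto
  then have "(\<Sum>a\<in>{0..<n}-{k}. w a * \<bar>A $$ (a,j)\<bar>) = (\<Sum>a\<in>{i}. w a * \<bar>A $$ (a,j)\<bar>)"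
    using i by (intro sum.mono_neutral_right) auto
  also have "\<dots> = w k * \<bar>A $$ (k,j)\<bar>"
    using column_balancingD[OF bal j, of i k] i k Akj A by simp
  finally show ?thesis by simp
qed

lemma Q0_transpose_carrier:
  "A \<in> carrier_mat n m \<Longrightarrow> B \<in> Q0 (transpose_mat A) \<Longrightarrow> B \<in> carrier_mat m n"
  unfolding Q0_def by simp

lemma transpose_product_weighted_diag_dominant:
  fixes w :: "nat \<Rightarrow> real"
  assumes A: "A \<in> carrier_mat n m" and B: "B \<in> Q0 (transpose_mat A)"
    and cols: "\<forall>j<m. card {i. i < n \<and> A $$ (i,j) \<noteq> 0} \<le> 2"
    and wpos: "\<forall>i<n. w i > 0" and bal: "column_balancing A w {0..<m}"
  shows "weighted_diag_dominant (transpose_mat (A * B)) n w"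
proof -
  have Bc: "B \<in> carrier_mat m n" by (rule Q0_transpose_carrier[OF A B])
  have AB: "(A * B) $$ (i,k) = (\<Sum>j=0..<m. A $$ (i,j) * B $$ (j,k))" if "i < n" "k < n" for i k
    using A Bc that by (simp add: scalar_prod_def)
  have column_term: "(\<Sum>i\<in>{0..<n}-{k}. w i * \<bar>A $$ (i,j)\<bar>) * \<bar>B $$ (j,k)\<bar> \<le> w k * (A $$ (k,j) * B $$ (j,k))"
    if j: "j < m" and k: "k < n" for j k
  proof (cases "B $$ (j,k) = 0")
    case False
    then have "sgn (B $$ (j,k)) = sgn (A $$ (k,j))" using B A j k unfolding Q0_def by auto
    then have Akj: "A $$ (k,j) \<noteq> 0" and AB_abs: "A $$ (k,j) * B $$ (j,k) = \<bar>A $$ (k,j)\<bar> * \<bar>B $$ (j,k)\<bar>"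
      using False by (auto simp: sgn_if abs_mult[symmetric] zero_le_mult_iff split: if_splits)
    have "(\<Sum>i\<in>{0..<n}-{k}. w i * \<bar>A $$ (i,j)\<bar>) \<le> w k * \<bar>A $$ (k,j)\<bar>"
      using balanced_column_off_sum_le[OF A _ k _ bal Akj] j cols wpos k by (simp add: less_imp_le)
    from mult_right_mono[OF this abs_ge_zero, of "B $$ (j,k)"]
    show ?thesis by (simp add: AB_abs mult.assoc)
  qed simp
  have AB_carrier: "A * B \<in> carrier_mat n n" using A Bc by simp
  have ABt: "transpose_mat (A * B) $$ (k,i) = (A * B) $$ (i,k)" if "i < n" "k < n" for i k
    using AB_carrier that by (intro index_transpose_mat(1)) auto
  show ?thesis
    unfolding weighted_diag_dominant_def
  proof (intro conjI allI impI)
    show "transpose_mat (A * B) \<in> carrier_mat n n" using AB_carrier by simp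
    show "w i > 0" if "i < n" for i using wpos that by simp
    fix k assume k: "k < n"
    have "(\<Sum>i\<in>{0..<n}-{k}. w i * \<bar>transpose_mat (A * B) $$ (k,i)\<bar>)
        = (\<Sum>i\<in>{0..<n}-{k}. w i * \<bar>(A * B) $$ (i,k)\<bar>)"
      using ABt k by (intro sum.cong) auto
    also have "\<dots>
        \<le> (\<Sum>i\<in>{0..<n}-{k}. \<Sum>j=0..<m. w i * \<bar>A $$ (i,j)\<bar> * \<bar>B $$ (j,k)\<bar>)"
    proof (rule sum_mono)
      fix i assume "i \<in> {0..<n}-{k}"
      then have "i < n" "w i > 0" using wpos by auto
      have "\<bar>(A * B) $$ (i,k)\<bar> \<le> (\<Sum>j=0..<m. \<bar>A $$ (i,j)\<bar> * \<bar>B $$ (j,k)\<bar>)"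
        using AB[OF \<open>i < n\<close> k] sum_abs[of "\<lambda>j. A $$ (i,j) * B $$ (j,k)" "{0..<m}"]
        by (simp add: abs_mult)
      from mult_left_mono[OF this, of "w i"] \<open>w i > 0\<close>
      show "w i * \<bar>(A * B) $$ (i,k)\<bar> \<le> (\<Sum>j=0..<m. w i * \<bar>A $$ (i,j)\<bar> * \<bar>B $$ (j,k)\<bar>)"
        by (simp add: sum_distrib_left mult.assoc)
    qed
    also have "\<dots> = (\<Sum>j=0..<m. (\<Sum>i\<in>{0..<n}-{k}. w i * \<bar>A $$ (i,j)\<bar>) * \<bar>B $$ (j,k)\<bar>)"
      by (subst sum.swap) (simp add: sum_distrib_right)
    also have "\<dots> \<le> (\<Sum>j=0..<m. w k * (A $$ (k,j) * B $$ (j,k)))"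
      using column_term k by (intro sum_mono) auto
    also have "\<dots> = w k * transpose_mat (A * B) $$ (k,k)"
      using AB[OF k k] ABt[OF k k] by (simp add: sum_distrib_left)
    finally show "(\<Sum>i\<in>{0..<n}-{k}. w i * \<bar>transpose_mat (A * B) $$ (k,i)\<bar>)
        \<le> w k * transpose_mat (A * B) $$ (k,k)" .
  qed
qed

section \<open>The second additive compound\<close>

lemma set_wedge_pairs: "set (wedge_pairs n) = {(i,j). i < j \<and> j < n}"
  unfolding wedge_pairs_def by fastforce

lemma distinct_wedge_pairs: "distinct (wedge_pairs n)"
proof -
  have "distinct (concat (map (\<lambda>i. map (Pair i) (h i)) xs))"
    if "distinct xs" "\<And>i. distinct (h i)" for xs :: "nat list" and h :: "nat \<Rightarrow> nat list"
    using that by (induction xs) (auto simp: distinct_map inj_on_def)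
  then show ?thesis unfolding wedge_pairs_def by auto
qed

lemma sum_nth_remove_distinct:
  assumes "distinct xs" "b < length xs"
  shows "(\<Sum>a\<in>{0..<length xs}-{b}. f (xs ! a)) = (\<Sum>p\<in>set xs - {xs ! b}. f p)"
proof -
  have inj: "inj_on ((!) xs) {0..<length xs}"
    using assms(1) by (intro inj_on_nth) auto
  have "(!) xs ` ({0..<length xs}-{b}) = set xs - {xs ! b}"
    using inj_on_image_set_diff[OF inj, of "{0..<length xs}" "{b}"] assms(2) nth_image[of "length xs" xs] by auto
  moreover have "inj_on ((!) xs) ({0..<length xs}-{b})"
    using inj by (rule inj_on_subset) auto
  ultimately show ?thesis
    using sum.reindex[of "(!) xs" "{0..<length xs}-{b}" f] by simp
qed

lemma sum_if_snd_eq: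
  "finite Q \<Longrightarrow> (\<Sum>p\<in>Q. if snd p = l then F (fst p) else 0) = (\<Sum>i\<in>{i. (i,l) \<in> Q}. F i)"
  by (subst sum.inter_filter[symmetric], simp)
    (rule sum.reindex_cong[of "\<lambda>i. (i,l)"], auto simp: inj_on_def image_iff)

lemma sum_if_fst_eq:
  "finite Q \<Longrightarrow> (\<Sum>p\<in>Q. if fst p = l then F (snd p) else 0) = (\<Sum>j\<in>{j. (l,j) \<in> Q}. F j)"
  by (subst sum.inter_filter[symmetric], simp)
    (rule sum.reindex_cong[of "\<lambda>j. (l,j)"], auto simp: inj_on_def image_iff)

lemma weighted_compound2_entry_le:
  fixes w :: "nat \<Rightarrow> real"
  assumes "w i \<ge> 0" "w j \<ge> 0"
  shows "w i * w j * \<bar>compound2_entry M (i,j) (k,l)\<bar> \<le>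
      (if j = l then w i * w l * \<bar>M $$ (i,k)\<bar> else 0) + (if i = l then w l * w j * \<bar>M $$ (j,k)\<bar> else 0)
    + (if i = k then w k * w j * \<bar>M $$ (j,l)\<bar> else 0) + (if j = k then w i * w k * \<bar>M $$ (i,l)\<bar> else 0)"
proof -
  have "\<bar>compound2_entry M (i,j) (k,l)\<bar> \<le> \<bar>if l = j then M $$ (i,k) else 0\<bar> + \<bar>if l = i then M $$ (j,k) else 0\<bar>
     + \<bar>if k = i then M $$ (j,l) else 0\<bar> + \<bar>if k = j then M $$ (i,l) else 0\<bar>"
    unfolding compound2_entry_def prod.case by (auto simp: abs_if)
  from mult_left_mono[OF this, of "w i * w j"] assms show ?thesis
    by (cases "j = l"; cases "i = l"; cases "i = k"; cases "j = k") (simp_all add: distrib_left ac_simps)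
qed

text \<open>Off the diagonal, the entries of column \<open>(k,l)\<close> of the compound are, up to sign, the
  entries of columns \<open>k\<close> and \<open>l\<close> of \<open>M\<close> outside rows \<open>k\<close> and \<open>l\<close>.\<close>
lemma compound2_balanced_column_off_sum_le:
  fixes w :: "nat \<Rightarrow> real"
  assumes w: "\<forall>i<n. w i \<ge> 0" and kl: "k < l" "l < n"
  shows "(\<Sum>p\<in>{(i,j). i < j \<and> j < n} - {(k,l)}. w (fst p) * w (snd p) * \<bar>compound2_entry M p (k,l)\<bar>)
    \<le> w l * (\<Sum>i\<in>{0..<n}-{k,l}. w i * \<bar>M $$ (i,k)\<bar>) + w k * (\<Sum>i\<in>{0..<n}-{k,l}. w i * \<bar>M $$ (i,l)\<bar>)"
proof -
  define Q where "Q = {(i,j). i < j \<and> j < n} - {(k,l)}"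
  have fin: "finite Q"
    by (rule finite_subset[of _ "{0..<n} \<times> {0..<n}"]) (auto simp: Q_def)
  let ?T1 = "\<lambda>p. if snd p = l then w (fst p) * w l * \<bar>M $$ (fst p,k)\<bar> else 0"
  let ?T2 = "\<lambda>p. if fst p = l then w l * w (snd p) * \<bar>M $$ (snd p,k)\<bar> else 0"
  let ?T3 = "\<lambda>p. if fst p = k then w k * w (snd p) * \<bar>M $$ (snd p,l)\<bar> else 0"
  let ?T4 = "\<lambda>p. if snd p = k then w (fst p) * w k * \<bar>M $$ (fst p,l)\<bar> else 0"
  have "w (fst p) * w (snd p) * \<bar>compound2_entry M p (k,l)\<bar> \<le> ?T1 p + ?T2 p + ?T3 p + ?T4 p"
    if "p \<in> Q" for p
  proof -
    obtain i j where "p = (i,j)" "i < n" "j < n" using \<open>p \<in> Q\<close> unfolding Q_def by auto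
    then show ?thesis
      using weighted_compound2_entry_le[of w i j M k l] w by (auto simp: eq_commute)
  qed
  then have "(\<Sum>p\<in>Q. w (fst p) * w (snd p) * \<bar>compound2_entry M p (k,l)\<bar>)
    \<le> (\<Sum>p\<in>Q. ?T1 p + ?T2 p + ?T3 p + ?T4 p)"
    by (rule sum_mono)
  also have "\<dots> = sum ?T1 Q + sum ?T2 Q + sum ?T3 Q + sum ?T4 Q"
    by (simp only: sum.distrib)
  also have "\<dots> = (\<Sum>i\<in>{0..<l}-{k}. w i * w l * \<bar>M $$ (i,k)\<bar>) + (\<Sum>i\<in>{l<..<n}. w l * w i * \<bar>M $$ (i,k)\<bar>)
      + (\<Sum>i\<in>{k<..<n}-{l}. w k * w i * \<bar>M $$ (i,l)\<bar>) + (\<Sum>i\<in>{0..<k}. w i * w k * \<bar>M $$ (i,l)\<bar>)"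
  proof -
    have "{i. (i,l) \<in> Q} = {0..<l}-{k}" "{j. (l,j) \<in> Q} = {l<..<n}"
      "{j. (k,j) \<in> Q} = {k<..<n}-{l}" "{i. (i,k) \<in> Q} = {0..<k}"
      unfolding Q_def using kl by auto
    then show ?thesis
      using sum_if_snd_eq[OF fin, where l=l and F="\<lambda>i. w i * w l * \<bar>M $$ (i,k)\<bar>"]
        sum_if_fst_eq[OF fin, where l=l and F="\<lambda>j. w l * w j * \<bar>M $$ (j,k)\<bar>"]
        sum_if_fst_eq[OF fin, where l=k and F="\<lambda>j. w k * w j * \<bar>M $$ (j,l)\<bar>"]
        sum_if_snd_eq[OF fin, where l=k and F="\<lambda>i. w i * w k * \<bar>M $$ (i,l)\<bar>"]
      by simp
  qed
  also have "\<dots> = w l * (\<Sum>i\<in>{0..<n}-{k,l}. w i * \<bar>M $$ (i,k)\<bar>) + w k * (\<Sum>i\<in>{0..<n}-{k,l}. w i * \<bar>M $$ (i,l)\<bar>)"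
  proof -
    have U1: "{0..<n}-{k,l} = ({0..<l}-{k}) \<union> {l<..<n}"
      and U2: "{0..<n}-{k,l} = ({k<..<n}-{l}) \<union> {0..<k}" using kl by auto
    have "(\<Sum>i\<in>{0..<n}-{k,l}. w i * \<bar>M $$ (i,k)\<bar>)
        = (\<Sum>i\<in>{0..<l}-{k}. w i * \<bar>M $$ (i,k)\<bar>) + (\<Sum>i\<in>{l<..<n}. w i * \<bar>M $$ (i,k)\<bar>)"
      unfolding U1 by (rule sum.union_disjoint) auto
    moreover have "(\<Sum>i\<in>{0..<n}-{k,l}. w i * \<bar>M $$ (i,l)\<bar>)
        = (\<Sum>i\<in>{k<..<n}-{l}. w i * \<bar>M $$ (i,l)\<bar>) + (\<Sum>i\<in>{0..<k}. w i * \<bar>M $$ (i,l)\<bar>)"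
      unfolding U2 by (rule sum.union_disjoint) auto
    ultimately show ?thesis by (simp add: sum_distrib_left algebra_simps)
  qed
  finally show ?thesis unfolding Q_def .
qed

lemma compound2_weighted_diag_dominant:
  fixes w :: "nat \<Rightarrow> real"
  assumes dom: "weighted_diag_dominant (transpose_mat M) n w" and M: "M \<in> carrier_mat n n"
  shows "weighted_diag_dominant (transpose_mat (compound2 M)) (length (wedge_pairs n))
           (\<lambda>a. w (fst (wedge_pairs n ! a)) * w (snd (wedge_pairs n ! a)))"
proof -
  define ps where "ps = wedge_pairs n"
  define N where "N = length ps"
  have wpos: "\<forall>i<n. w i > 0" using dom unfolding weighted_diag_dominant_def by auto
  have col: "(\<Sum>i\<in>{0..<n}-{k}. w i * \<bar>M $$ (i,k)\<bar>) \<le> w k * M $$ (k,k)" if "k < n" for k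
    using dom that M unfolding weighted_diag_dominant_def by auto
  have C: "compound2 M = mat N N (\<lambda>(a,b). compound2_entry M (ps ! a) (ps ! b))"
    unfolding compound2_def N_def ps_def Let_def using M by simp
  have Ct: "transpose_mat (compound2 M) $$ (b,a) = compound2_entry M (ps ! a) (ps ! b)"
    if "a < N" "b < N" for a b
    using that by (simp add: C)
  have ps_set: "set ps = {(i,j). i < j \<and> j < n}" unfolding ps_def by (rule set_wedge_pairs)
  show ?thesis unfolding weighted_diag_dominant_def ps_def[symmetric] N_def[symmetric]
  proof (intro conjI allI impI)
    show "transpose_mat (compound2 M) \<in> carrier_mat N N" by (simp add: C)
    fix b assume b: "b < N"
    obtain k l where kl: "ps ! b = (k,l)" by (cases "ps ! b")
    have "(k,l) \<in> set ps" using b kl unfolding N_def by (metis nth_mem)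
    then have kl': "k < l" "l < n" using ps_set by auto
    then show "w (fst (ps ! b)) * w (snd (ps ! b)) > 0" using wpos kl by simp
    have "(\<Sum>a\<in>{0..<N}-{b}. w (fst (ps ! a)) * w (snd (ps ! a)) * \<bar>transpose_mat (compound2 M) $$ (b,a)\<bar>)
      = (\<Sum>a\<in>{0..<N}-{b}. w (fst (ps ! a)) * w (snd (ps ! a)) * \<bar>compound2_entry M (ps ! a) (k,l)\<bar>)"
      using Ct b kl by (intro sum.cong) auto
    also have "\<dots> = (\<Sum>p\<in>set ps - {(k,l)}. w (fst p) * w (snd p) * \<bar>compound2_entry M p (k,l)\<bar>)"
      using sum_nth_remove_distinct[of ps b] distinct_wedge_pairs b kl unfolding N_def ps_def by simp
    also have "\<dots> \<le> w l * (\<Sum>i\<in>{0..<n}-{k,l}. w i * \<bar>M $$ (i,k)\<bar>) + w k * (\<Sum>i\<in>{0..<n}-{k,l}. w i * \<bar>M $$ (i,l)\<bar>)"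
      unfolding ps_set using compound2_balanced_column_off_sum_le[OF _ kl'] wpos by (simp add: less_imp_le)
    also have "\<dots> \<le> w l * (w k * M $$ (k,k)) + w k * (w l * M $$ (l,l))"
    proof -
      have "(\<Sum>i\<in>{0..<n}-{k,l}. w i * \<bar>M $$ (i,c)\<bar>) \<le> w c * M $$ (c,c)" if "c \<in> {k,l}" for c
      proof -
        have "(\<Sum>i\<in>{0..<n}-{k,l}. w i * \<bar>M $$ (i,c)\<bar>) \<le> (\<Sum>i\<in>{0..<n}-{c}. w i * \<bar>M $$ (i,c)\<bar>)"
          using that wpos by (intro sum_mono2) (auto simp: less_imp_le)
        also have "\<dots> \<le> w c * M $$ (c,c)" using col that kl' by auto
        finally show ?thesis .
      qed
      moreover have "w k \<ge> 0" "w l \<ge> 0" using wpos kl' by (auto simp: less_imp_le)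
      ultimately show ?thesis by (simp add: add_mono mult_left_mono)
    qed
    also have "\<dots> = w (fst (ps ! b)) * w (snd (ps ! b)) * transpose_mat (compound2 M) $$ (b,b)"
      using Ct[OF b b] kl kl' by (simp add: compound2_entry_def algebra_simps)
    finally show "(\<Sum>a\<in>{0..<N}-{b}. w (fst (ps ! a)) * w (snd (ps ! a)) * \<bar>transpose_mat (compound2 M) $$ (b,a)\<bar>)
      \<le> w (fst (ps ! b)) * w (snd (ps ! b)) * transpose_mat (compound2 M) $$ (b,b)" .
  qed
qed

section \<open>Balancing weights from steadiness\<close>

definition alternating_vertices :: "(nat \<Rightarrow> nat) \<Rightarrow> (nat \<Rightarrow> nat) \<Rightarrow> nat \<Rightarrow> dsr_vertex list" where
  "alternating_vertices x y L = map (\<lambda>q. if even q then SV (x (q div 2)) else RV (y (q div 2))) [0..<2*L]"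

definition alternating_edges :: "(nat \<Rightarrow> nat) \<Rightarrow> (nat \<Rightarrow> nat) \<Rightarrow> nat \<Rightarrow> dsr_edge list" where
  "alternating_edges x y L = map (\<lambda>q. if even q then Und (x (q div 2)) (y (q div 2))
     else Und (x (Suc (q div 2) mod L)) (y (q div 2))) [0..<2*L]"

lemma und_edge_transpose:
  assumes "A \<in> carrier_mat n m" "i < n" "j < m" "A $$ (i,j) \<noteq> 0"
  shows "Und i j \<in> dsr_edges A (transpose_mat A)"
  using assms unfolding dsr_edges_def by auto

lemma dsr_cycle_alternating:
  assumes A: "A \<in> carrier_mat n m" and L: "L \<ge> 2"
    and x: "inj_on x {..<L}" and y: "inj_on y {..<L}"
    and entries: "\<And>t. t < L \<Longrightarrow> x t < n \<and> y t < m \<and> A $$ (x t, y t) \<noteq> 0 \<and> A $$ (x (Suc t mod L), y t) \<noteq> 0"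
  shows "dsr_cycle A (transpose_mat A) (alternating_vertices x y L) (alternating_edges x y L)"
proof -
  define V where "V q = (if even q then SV (x (q div 2)) else RV (y (q div 2)))" for q
  define E where "E q = (if even q then Und (x (q div 2)) (y (q div 2))
     else Und (x (Suc (q div 2) mod L)) (y (q div 2)))" for q
  have vs: "alternating_vertices x y L = map V [0..<2*L]"
    and es: "alternating_edges x y L = map E [0..<2*L]"
    unfolding alternating_vertices_def alternating_edges_def V_def E_def by simp_all
  have half: "q div 2 < L" if "q < 2 * L" for q using that by auto
  have parity_half: "q1 = q2" if "even q1 = even q2" "q1 div 2 = q2 div 2" for q1 q2 :: nat
    using that by presburger
  have step: "x (Suc t mod L) \<noteq> x t" if "t < L" for t
  proof
    assume "x (Suc t mod L) = x t"
    then have tt: "Suc t mod L = t" using inj_onD[OF x] that L by simp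
    show False
    proof (cases "Suc t < L")
      case True then show False using tt by simp
    next
      case False then have "Suc t = L" using that by simp
      then show False using tt L by simp
    qed
  qed
  have "inj_on V {0..<2*L}"
  proof (rule inj_onI)
    fix q1 q2 assume q: "q1 \<in> {0..<2*L}" "q2 \<in> {0..<2*L}" and eq: "V q1 = V q2"
    then have par: "even q1 = even q2" unfolding V_def by (auto split: if_splits)
    have h: "q1 div 2 \<in> {..<L}" "q2 div 2 \<in> {..<L}" using half q by auto
    have "x (q1 div 2) = x (q2 div 2) \<or> y (q1 div 2) = y (q2 div 2)"
      using eq unfolding V_def by (auto split: if_splits)
    then have "q1 div 2 = q2 div 2"
      using inj_onD[OF x _ h] inj_onD[OF y _ h] by blast
    with par show "q1 = q2" by (rule parity_half)
  qed
  moreover have "inj_on E {0..<2*L}"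
  proof (rule inj_onI)
    fix q1 q2 assume q: "q1 \<in> {0..<2*L}" "q2 \<in> {0..<2*L}" and eq: "E q1 = E q2"
    then have "y (q1 div 2) = y (q2 div 2)" unfolding E_def by (auto split: if_splits)
    moreover have "q1 div 2 \<in> {..<L}" "q2 div 2 \<in> {..<L}" using half q by auto
    ultimately have t: "q1 div 2 = q2 div 2" by (rule inj_onD[OF y])
    have "even q1 = even q2"
    proof (rule ccontr)
      assume "even q1 \<noteq> even q2"
      then have "x (Suc (q1 div 2) mod L) = x (q1 div 2)"
        using eq t unfolding E_def by (auto split: if_splits)
      with step[of "q1 div 2"] half q show False by simp
    qed
    with t show "q1 = q2" using parity_half by blast
  qed
  moreover have "E q \<in> dsr_edges A (transpose_mat A)" if "q < 2 * L" for q
  proof -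
    have "x (Suc (q div 2) mod L) < n" using entries[of "Suc (q div 2) mod L"] L by simp
    then show ?thesis
      using entries[OF half[OF that]] unfolding E_def by (auto intro: und_edge_transpose[OF A])
  qed
  moreover have "traverses (E q) (V q) (V (Suc q mod (2 * L)))" if q: "q < 2 * L" for q
  proof (cases "even q")
    case True
    then obtain t where "q = 2 * t" by (rule evenE)
    then have "Suc q mod (2 * L) = Suc q" "Suc q div 2 = q div 2" using q by simp_all
    then show ?thesis using True unfolding E_def V_def traverses_def by simp
  next
    case False
    then obtain t where q2: "q = 2 * t + 1" by (rule oddE)
    then have "Suc q mod (2 * L) = 2 * (Suc t mod L)" "q div 2 = t"
      by (simp_all add: mod_mult_mult1[symmetric])
    then show ?thesis using False unfolding E_def V_def traverses_def by simp
  qed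
  ultimately show ?thesis
    unfolding dsr_cycle_def vs es distinct_map using L by (simp add: image_subset_iff)
qed

lemma even_less_double_eq_image: "{q. q < 2 * L \<and> even q} = (\<lambda>t. 2 * t) ` {..<L::nat}"
  by (auto elim!: evenE)

lemma odd_less_double_eq_image: "{q. q < 2 * L \<and> odd q} = (\<lambda>t. 2 * t + 1) ` {..<L::nat}"
  by (auto elim!: oddE)

lemma steady_alternating_product:
  assumes A: "A \<in> carrier_mat n m" and st: "steady A (transpose_mat A)" and L: "L \<ge> 2"
    and x: "inj_on x {..<L}" and y: "inj_on y {..<L}"
    and entries: "\<And>t. t < L \<Longrightarrow> x t < n \<and> y t < m \<and> A $$ (x t, y t) \<noteq> 0 \<and> A $$ (x (Suc t mod L), y t) \<noteq> 0"
  shows "(\<Prod>t<L. \<bar>A $$ (x t, y t)\<bar>) = (\<Prod>t<L. \<bar>A $$ (x (Suc t mod L), y t)\<bar>)"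
proof -
  let ?es = "alternating_edges x y L"
  let ?lab = "\<lambda>q. the (dsr_label A (?es ! q))"
  have "s_cycle A ?es"
    using st dsr_cycle_alternating[OF A L x y entries] unfolding steady_def by blast
  then have "(\<Prod>q\<in>{q. q < 2 * L \<and> even q}. ?lab q) = (\<Prod>q\<in>{q. q < 2 * L \<and> odd q}. ?lab q)"
    unfolding s_cycle_def by (simp add: alternating_edges_def)
  moreover have "(\<Prod>q\<in>{q. q < 2 * L \<and> even q}. ?lab q) = (\<Prod>t<L. \<bar>A $$ (x t, y t)\<bar>)"
    unfolding even_less_double_eq_image
    by (subst prod.reindex) (auto simp: inj_on_def alternating_edges_def dsr_label_def)
  moreover have "(\<Prod>q\<in>{q. q < 2 * L \<and> odd q}. ?lab q) = (\<Prod>t<L. \<bar>A $$ (x (Suc t mod L), y t)\<bar>)"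
    unfolding odd_less_double_eq_image
    by (subst prod.reindex) (auto simp: inj_on_def alternating_edges_def dsr_label_def)
  ultimately show ?thesis by simp
qed

lemma prod_telescope:
  fixes u a b :: "nat \<Rightarrow> real"
  assumes "\<And>t. t < p \<Longrightarrow> u t * a t = u (Suc t) * b t"
  shows "u 0 * (\<Prod>t<p. a t) = u p * (\<Prod>t<p. b t)"
  using assms
proof (induction p)
  case (Suc p)
  then have "u 0 * (\<Prod>t<Suc p. a t) = u p * a p * (\<Prod>t<p. b t)"
    by (simp add: ac_simps)
  also have "\<dots> = u (Suc p) * (\<Prod>t<Suc p. b t)"
    using Suc.prems[of p] by (simp add: ac_simps)
  finally show ?case .
qed simp

definition labelled_walk :: "('a \<Rightarrow> 'a \<Rightarrow> 'l \<Rightarrow> bool) \<Rightarrow> 'a \<Rightarrow> 'a \<Rightarrow> nat \<Rightarrow> (nat \<Rightarrow> 'a) \<Rightarrow> (nat \<Rightarrow> 'l) \<Rightarrow> bool" where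
  "labelled_walk R i k p x y \<longleftrightarrow> x 0 = i \<and> x p = k \<and> (\<forall>t<p. R (x t) (x (Suc t)) (y t))"

lemma labelled_walk_if_rtrancl:
  assumes "(i,k) \<in> {(a,b). \<exists>c. R a b c}\<^sup>*"
  shows "\<exists>p x y. labelled_walk R i k p x y"
  using assms
proof (induction rule: rtrancl_induct)
  case base
  have "labelled_walk R i i 0 (\<lambda>_. i) (\<lambda>_. undefined)" unfolding labelled_walk_def by simp
  then show ?case by blast
next
  case (step a b)
  then obtain p x y c where w: "labelled_walk R i a p x y" and c: "R a b c" by blast
  then have "labelled_walk R i b (Suc p) (x(Suc p := b)) (y(p := c))"
    unfolding labelled_walk_def by (auto simp: less_Suc_eq)
  then show ?case by blast
qed

text \<open>Cutting out the closed subwalk between two visits of the same vertex.\<close>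
lemma labelled_walk_shortcut:
  assumes "labelled_walk R i k p x y"
  shows "\<exists>p x y. labelled_walk R i k p x y \<and> inj_on x {..p}"
  using assms
proof (induction p arbitrary: x y rule: less_induct)
  case (less p)
  show ?case
  proof (cases "inj_on x {..p}")
    case False
    then obtain a b where ab: "a < b" "b \<le> p" "x a = x b"
      unfolding inj_on_def by (metis atMost_iff linorder_neqE_nat)
    define x' where "x' t = (if t \<le> a then x t else x (t + (b - a)))" for t
    define y' where "y' t = (if t < a then y t else y (t + (b - a)))" for t
    have "labelled_walk R i k (p - (b - a)) x' y'"
      using less.prems ab unfolding labelled_walk_def x'_def y'_def
      by (auto simp: not_less Suc_le_eq le_less)
    moreover have "p - (b - a) < p" using ab by simp
    ultimately show ?thesis using less.IH by blast
  qed (use less.prems in blast)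
qed

definition shared_column :: "real mat \<Rightarrow> nat set \<Rightarrow> nat \<Rightarrow> nat \<Rightarrow> nat \<Rightarrow> bool" where
  "shared_column A J a b c \<longleftrightarrow> c \<in> J \<and> a < dim_row A \<and> b < dim_row A \<and> a \<noteq> b
     \<and> A $$ (a,c) \<noteq> 0 \<and> A $$ (b,c) \<noteq> 0"

text \<open>A column used twice would contain three distinct rows of the walk.\<close>
lemma inj_on_walk_columns:
  assumes cols: "\<forall>c\<in>J. card {a. a < dim_row A \<and> A $$ (a,c) \<noteq> 0} \<le> 2"
    and walk: "labelled_walk (shared_column A J) i k p x y" and inj: "inj_on x {..p}"
  shows "inj_on y {..<p}"
proof (rule linorder_inj_onI)
  have step: "shared_column A J (x t) (x (Suc t)) (y t)" if "t < p" for t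
    using walk that unfolding labelled_walk_def by blast
  fix s t assume st: "s < t" "t \<in> {..<p}"
  show "y s \<noteq> y t"
  proof
    assume eq: "y s = y t"
    let ?S = "{a. a < dim_row A \<and> A $$ (a, y t) \<noteq> 0}"
    have "x s \<in> ?S" "x (Suc s) \<in> ?S" "x (Suc t) \<in> ?S" "x s \<noteq> x (Suc s)"
      using step[of s] step[of t] st eq unfolding shared_column_def by auto
    moreover have "card ?S \<le> 2" using cols step[of t] st unfolding shared_column_def by auto
    ultimately have "x (Suc t) = x s \<or> x (Suc t) = x (Suc s)"
      using card_le_two_cases[of ?S] by auto
    then have "Suc t = s \<or> Suc t = Suc s"
      using inj_onD[OF inj, of "Suc t" s] inj_onD[OF inj, of "Suc t" "Suc s"] st by auto
    then show False using st by simp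
  qed
qed auto

text \<open>A walk from \<open>i\<close> to \<open>k\<close> through the columns \<open>J\<close>, closed up by column \<open>j\<close>, is a cycle
  of the DSR graph. Steadiness equates the products of the two alternating label sets, while
  the balancing relations of \<open>J\<close> telescope along the walk.\<close>
lemma column_balancing_closes_walk:
  fixes w :: "nat \<Rightarrow> real"
  assumes A: "A \<in> carrier_mat n m" and st: "steady A (transpose_mat A)"
    and cols: "\<forall>c\<in>J. card {a. a < n \<and> A $$ (a,c) \<noteq> 0} \<le> 2"
    and J: "J \<subseteq> {0..<m}" and j: "j < m" "j \<notin> J"
    and ik: "i < n" "k < n" "i \<noteq> k" "A $$ (i,j) \<noteq> 0" "A $$ (k,j) \<noteq> 0"
    and walk: "labelled_walk (shared_column A J) i k p x y" and inj: "inj_on x {..p}"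
    and bal: "column_balancing A w J"
  shows "w i * \<bar>A $$ (i,j)\<bar> = w k * \<bar>A $$ (k,j)\<bar>"
proof -
  have x0: "x 0 = i" and xp: "x p = k" using walk unfolding labelled_walk_def by auto
  have step: "shared_column A J (x t) (x (Suc t)) (y t)" if "t < p" for t
    using walk that unfolding labelled_walk_def by blast
  have dim: "dim_row A = n" using A by simp
  have "p \<noteq> 0" using x0 xp ik(3) by (cases "p = 0") simp_all
  define Y where "Y t = (if t < p then y t else j)" for t
  have y_inj: "inj_on y {..<p}"
    using inj_on_walk_columns[OF _ walk inj] cols dim by simp
  have Y_inj: "inj_on Y {..<Suc p}"
  proof (rule linorder_inj_onI)
    fix s t assume "s < t" "t \<in> {..<Suc p}"
    then show "Y s \<noteq> Y t"
      using inj_onD[OF y_inj, of s t] step[of s] j(2) unfolding Y_def shared_column_def by auto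
  qed auto
  let ?a = "\<lambda>t. \<bar>A $$ (x t, y t)\<bar>" and ?b = "\<lambda>t. \<bar>A $$ (x (Suc t), y t)\<bar>"
  have next_row: "x (Suc t mod Suc p) = (if t < p then x (Suc t) else i)" if "t \<le> p" for t
    using that x0 by (auto simp: not_less)
  have "(\<Prod>t<Suc p. \<bar>A $$ (x t, Y t)\<bar>) = (\<Prod>t<Suc p. \<bar>A $$ (x (Suc t mod Suc p), Y t)\<bar>)"
  proof (rule steady_alternating_product[OF A st _ inj_on_subset[OF inj] Y_inj])
    fix t assume t: "t < Suc p"
    show "x t < n \<and> Y t < m \<and> A $$ (x t, Y t) \<noteq> 0 \<and> A $$ (x (Suc t mod Suc p), Y t) \<noteq> 0"
    proof (cases "t < p")
      case True
      have "Y t = y t" "x (Suc t mod Suc p) = x (Suc t)"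
        using True next_row[of t] by (simp_all add: Y_def)
      moreover have "y t < m" using step[OF True] J unfolding shared_column_def by auto
      ultimately show ?thesis using step[OF True] dim unfolding shared_column_def by simp
    next
      case False
      then have "t = p" using t by simp
      moreover have "x (Suc p mod Suc p) = i" using next_row[of p] by simp
      ultimately show ?thesis using xp ik j by (simp add: Y_def)
    qed
  qed (use \<open>p \<noteq> 0\<close> in auto)
  moreover have "(\<Prod>t<Suc p. \<bar>A $$ (x t, Y t)\<bar>) = (\<Prod>t<p. ?a t) * \<bar>A $$ (k,j)\<bar>"
    using xp by (simp add: Y_def)
  moreover have "(\<Prod>t<Suc p. \<bar>A $$ (x (Suc t mod Suc p), Y t)\<bar>) = (\<Prod>t<p. ?b t) * \<bar>A $$ (i,j)\<bar>"
  proof -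
    have "(\<Prod>t<p. \<bar>A $$ (x (Suc t mod Suc p), Y t)\<bar>) = (\<Prod>t<p. ?b t)"
      by (rule prod.cong) (simp_all add: Y_def)
    then show ?thesis using next_row[of p] by (simp add: Y_def)
  qed
  ultimately have cycle: "(\<Prod>t<p. ?a t) * \<bar>A $$ (k,j)\<bar> = (\<Prod>t<p. ?b t) * \<bar>A $$ (i,j)\<bar>"
    by simp
  have "w (x t) * ?a t = w (x (Suc t)) * ?b t" if "t < p" for t
    using column_balancingD[OF bal, of "y t" "x t" "x (Suc t)"] step[OF that]
    unfolding shared_column_def by simp
  then have telescope: "w i * (\<Prod>t<p. ?a t) = w k * (\<Prod>t<p. ?b t)"
    using prod_telescope[of p "w \<circ> x" ?a ?b] x0 xp by simp
  have "(\<Prod>t<p. ?b t) \<noteq> 0"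
    using step unfolding shared_column_def by simp
  moreover have "(w i * \<bar>A $$ (i,j)\<bar>) * (\<Prod>t<p. ?b t) = \<bar>A $$ (k,j)\<bar> * (w i * (\<Prod>t<p. ?a t))"
    using cycle by (simp only: ac_simps)
  then have "(w i * \<bar>A $$ (i,j)\<bar>) * (\<Prod>t<p. ?b t) = (w k * \<bar>A $$ (k,j)\<bar>) * (\<Prod>t<p. ?b t)"
    unfolding telescope by (simp only: ac_simps)
  ultimately show ?thesis by simp
qed

lemma column_balancing_insert_iff:
  "column_balancing A w (insert j J) \<longleftrightarrow> column_balancing A w {j} \<and> column_balancing A w J"
  unfolding column_balancing_def by blast

lemma column_balancing_two_entries:
  assumes two: "card {a. a < dim_row A \<and> A $$ (a,j) \<noteq> 0} \<le> 2"
    and ik: "i < dim_row A" "k < dim_row A" "i \<noteq> k" "A $$ (i,j) \<noteq> 0" "A $$ (k,j) \<noteq> 0"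
    and eq: "w i * \<bar>A $$ (i,j)\<bar> = w k * \<bar>A $$ (k,j)\<bar>"
  shows "column_balancing A w {j}"
  unfolding column_balancing_def
proof (intro ballI allI impI)
  fix c a b assume "c \<in> {j}" and ab: "a < dim_row A" "b < dim_row A" "A $$ (a,c) \<noteq> 0" "A $$ (b,c) \<noteq> 0"
  then have "(a = i \<or> a = k) \<and> (b = i \<or> b = k)"
    using card_le_two_cases[OF _ two, of i k] ik by auto
  then show "w a * \<bar>A $$ (a,c)\<bar> = w b * \<bar>A $$ (b,c)\<bar>" using eq \<open>c \<in> {j}\<close> by auto
qed

text \<open>Any two nonzero rows of a column of \<open>J\<close> are adjacent in \<open>E\<close>.\<close>
lemma column_balancing_rescale_component:
  assumes bal: "column_balancing A w J"
  defines "E \<equiv> {(a,b). \<exists>c. shared_column A J a b c}"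
  shows "column_balancing A (\<lambda>a. if (i,a) \<in> E\<^sup>* then s * w a else w a) J"
  unfolding column_balancing_def
proof (intro ballI allI impI)
  fix c a b assume c: "c \<in> J" and ab: "a < dim_row A" "b < dim_row A" "A $$ (a,c) \<noteq> 0" "A $$ (b,c) \<noteq> 0"
  have "(i,a) \<in> E\<^sup>* \<longleftrightarrow> (i,b) \<in> E\<^sup>*"
  proof (cases "a = b")
    case False
    then have "(a,b) \<in> E" "(b,a) \<in> E" using c ab unfolding E_def shared_column_def by auto
    then show ?thesis using rtrancl_into_rtrancl by metis
  qed simp
  then show "(if (i,a) \<in> E\<^sup>* then s * w a else w a) * \<bar>A $$ (a,c)\<bar>
      = (if (i,b) \<in> E\<^sup>* then s * w b else w b) * \<bar>A $$ (b,c)\<bar>"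
    using column_balancingD[OF bal c ab] by (simp add: mult.assoc)
qed

text \<open>Balancing a new column \<open>j\<close> with nonzero rows \<open>i\<close> and \<open>k\<close>: if \<open>i\<close> and \<open>k\<close> are already
  connected through \<open>J\<close>, steadiness makes the existing weights work; otherwise the
  component of \<open>i\<close> is rescaled.\<close>
lemma column_balancing_extend:
  fixes w :: "nat \<Rightarrow> real"
  assumes A: "A \<in> carrier_mat n m" and st: "steady A (transpose_mat A)"
    and cols: "\<forall>c<m. card {a. a < n \<and> A $$ (a,c) \<noteq> 0} \<le> 2"
    and J: "J \<subseteq> {0..<m}" and j: "j < m" "j \<notin> J"
    and wpos: "\<forall>a<n. w a > 0" and bal: "column_balancing A w J"
  shows "\<exists>w'. (\<forall>a<n. w' a > 0) \<and> column_balancing A w' (insert j J)"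
proof (cases "\<exists>i k. i < n \<and> k < n \<and> i \<noteq> k \<and> A $$ (i,j) \<noteq> 0 \<and> A $$ (k,j) \<noteq> 0")
  case False
  then have "column_balancing A w {j}" using A unfolding column_balancing_def by auto
  then show ?thesis using wpos bal column_balancing_insert_iff by blast
next
  case True
  then obtain i k where ik: "i < n" "k < n" "i \<noteq> k" "A $$ (i,j) \<noteq> 0" "A $$ (k,j) \<noteq> 0" by blast
  have dim: "dim_row A = n" using A by simp
  have two: "card {a. a < dim_row A \<and> A $$ (a,j) \<noteq> 0} \<le> 2" using cols j dim by simp
  define E where "E = {(a,b). \<exists>c. shared_column A J a b c}"
  show ?thesis
  proof (cases "(i,k) \<in> E\<^sup>*")
    case True
    then obtain p x y where "labelled_walk (shared_column A J) i k p x y"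
      using labelled_walk_if_rtrancl[of i k "shared_column A J"] unfolding E_def by blast
    from labelled_walk_shortcut[OF this]
    obtain p x y where walk: "labelled_walk (shared_column A J) i k p x y" and inj: "inj_on x {..p}"
      by blast
    have "\<forall>c\<in>J. card {a. a < n \<and> A $$ (a,c) \<noteq> 0} \<le> 2" using cols J by auto
    from column_balancing_closes_walk[OF A st this J j ik walk inj bal]
    have "w i * \<bar>A $$ (i,j)\<bar> = w k * \<bar>A $$ (k,j)\<bar>" .
    then have "column_balancing A w {j}"
      using column_balancing_two_entries[OF two] ik dim by simp
    then show ?thesis using wpos bal column_balancing_insert_iff by blast
  next
    case False
    define s where "s = (w k * \<bar>A $$ (k,j)\<bar>) / (w i * \<bar>A $$ (i,j)\<bar>)"
    define w' where "w' a = (if (i,a) \<in> E\<^sup>* then s * w a else w a)" for a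
    have "s > 0" unfolding s_def using wpos ik by simp
    then have "\<forall>a<n. w' a > 0" unfolding w'_def using wpos by simp
    moreover have "w' i * \<bar>A $$ (i,j)\<bar> = w' k * \<bar>A $$ (k,j)\<bar>"
    proof -
      have "w i \<noteq> 0" using wpos ik by auto
      then show ?thesis using False ik unfolding w'_def s_def by simp
    qed
    then have "column_balancing A w' {j}"
      using column_balancing_two_entries[OF two] ik dim by simp
    moreover have "column_balancing A w' J"
      unfolding w'_def E_def by (rule column_balancing_rescale_component[OF bal])
    ultimately show ?thesis using column_balancing_insert_iff by blast
  qed
qed

lemma exists_column_balancing:
  assumes A: "A \<in> carrier_mat n m" and st: "steady A (transpose_mat A)"
    and cols: "\<forall>c<m. card {a. a < n \<and> A $$ (a,c) \<noteq> 0} \<le> 2"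
  shows "\<exists>w::nat \<Rightarrow> real. (\<forall>a<n. w a > 0) \<and> column_balancing A w {0..<m}"
proof -
  have "\<exists>w::nat \<Rightarrow> real. (\<forall>a<n. w a > 0) \<and> column_balancing A w J" if "J \<subseteq> {0..<m}" for J
    using finite_subset[OF that finite_atLeastLessThan] that
  proof (induction J rule: finite_induct)
    case empty
    have "column_balancing A (\<lambda>_. 1) {}" unfolding column_balancing_def by simp
    then show ?case by (intro exI[of _ "\<lambda>_. 1"]) simp
  next
    case (insert j J)
    then show ?case using column_balancing_extend[OF A st cols] by auto
  qed
  then show ?thesis by blast
qed

section \<open>Transposition\<close>

fun swap_vertex :: "dsr_vertex \<Rightarrow> dsr_vertex" where
  "swap_vertex (SV i) = RV i" | "swap_vertex (RV j) = SV j"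

fun swap_edge :: "dsr_edge \<Rightarrow> dsr_edge" where
  "swap_edge (Und i j) = Und j i" | "swap_edge (RS i j) = SR j i" | "swap_edge (SR i j) = RS j i"

lemma inj_swap_vertex: "inj swap_vertex"
proof (rule injI)
  fix u v show "swap_vertex u = swap_vertex v \<Longrightarrow> u = v" by (cases u; cases v) auto
qed

lemma inj_swap_edge: "inj swap_edge"
proof (rule injI)
  fix e f show "swap_edge e = swap_edge f \<Longrightarrow> e = f" by (cases e; cases f) auto
qed

lemma traverses_swap: "traverses e u v \<Longrightarrow> traverses (swap_edge e) (swap_vertex u) (swap_vertex v)"
  by (cases e) (auto simp: traverses_def)

lemma dsr_edges_transpose_transpose:
  assumes "A \<in> carrier_mat n m" "e \<in> dsr_edges (transpose_mat A) A"
  shows "\<exists>i j. e = Und i j \<and> i < m \<and> j < n \<and> A $$ (j,i) \<noteq> 0"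
  using assms unfolding dsr_edges_def by auto

text \<open>Exchanging S- and R-vertices maps the cycles of the DSR graph of \<open>A\<^sup>T\<close> and \<open>A\<close>
  onto cycles of the DSR graph of \<open>A\<close> and \<open>A\<^sup>T\<close> with the same labels.\<close>
lemma steady_transpose:
  assumes A: "A \<in> carrier_mat n m" and st: "steady A (transpose_mat A)"
  shows "steady (transpose_mat A) A"
  unfolding steady_def
proof (intro allI impI)
  fix vs es assume cyc: "dsr_cycle (transpose_mat A) A vs es"
  have E: "\<exists>i j. e = Und i j \<and> i < m \<and> j < n \<and> A $$ (j,i) \<noteq> 0" if "e \<in> set es" for e
    using cyc that dsr_edges_transpose_transpose[OF A] unfolding dsr_cycle_def by blast
  have "dsr_cycle A (transpose_mat A) (map swap_vertex vs) (map swap_edge es)"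
    unfolding dsr_cycle_def
  proof (intro conjI allI impI)
    show "set (map swap_edge es) \<subseteq> dsr_edges A (transpose_mat A)"
      using E und_edge_transpose[OF A] by fastforce
    fix q assume "q < length (map swap_edge es)"
    moreover have "length vs > 0" "length es = length vs" using cyc unfolding dsr_cycle_def by auto
    ultimately show "traverses (map swap_edge es ! q) (map swap_vertex vs ! q)
        (map swap_vertex vs ! (Suc q mod length (map swap_vertex vs)))"
      using cyc traverses_swap unfolding dsr_cycle_def by simp
  qed (use cyc inj_swap_vertex inj_swap_edge in \<open>auto simp: dsr_cycle_def distinct_map inj_on_def inj_def\<close>)
  then have "s_cycle A (map swap_edge es)" using st unfolding steady_def by blast
  moreover have "dsr_label A (swap_edge e) = dsr_label (transpose_mat A) e" if "e \<in> set es" for e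
    using E[OF that] A unfolding dsr_label_def by auto
  ultimately show "s_cycle (transpose_mat A) es"
    using E unfolding s_cycle_def by (auto simp: dsr_label_def)
qed

lemma Q0_transpose:
  assumes A: "A \<in> carrier_mat n m" and B: "B \<in> Q0 (transpose_mat A)"
  shows "transpose_mat B \<in> Q0 A"
  unfolding Q0_def
proof (intro CollectI conjI allI impI)
  have B': "B \<in> carrier_mat m n"
    and sg: "\<And>i j. i < m \<Longrightarrow> j < n \<Longrightarrow> B $$ (i,j) = 0 \<or> sgn (B $$ (i,j)) = sgn (A $$ (j,i))"
    using assms unfolding Q0_def by auto
  show "transpose_mat B \<in> carrier_mat (dim_row A) (dim_col A)" using A B' by simp
  fix i j assume "i < dim_row A" "j < dim_col A"
  then show "transpose_mat B $$ (i,j) = 0 \<or> sgn (transpose_mat B $$ (i,j)) = sgn (A $$ (i,j))"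
    using sg[of j i] A B' by simp
qed

lemma eigenvalue_mult_commute:
  fixes A B :: "'a::field mat"
  assumes A: "A \<in> carrier_mat n m" and B: "B \<in> carrier_mat m n"
    and ev: "eigenvalue (A * B) z" and z: "z \<noteq> 0"
  shows "eigenvalue (B * A) z"
proof -
  from ev obtain v where v: "v \<in> carrier_vec n" "v \<noteq> 0\<^sub>v n" and eq: "(A * B) *\<^sub>v v = z \<cdot>\<^sub>v v"
    using A B unfolding eigenvalue_def eigenvector_def by auto
  define u where "u = B *\<^sub>v v"
  have u: "u \<in> carrier_vec m" unfolding u_def using B v(1) by simp
  have Au: "A *\<^sub>v u = z \<cdot>\<^sub>v v" unfolding u_def using eq A B v(1) by simp
  have "u \<noteq> 0\<^sub>v m"
  proof
    assume "u = 0\<^sub>v m"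
    have "v $ i = 0" if "i < n" for i
    proof -
      have "z * v $ i = (A *\<^sub>v u) $ i" using Au that v(1) by simp
      also have "\<dots> = row A i \<bullet> 0\<^sub>v m" using \<open>u = 0\<^sub>v m\<close> A that by simp
      also have "\<dots> = 0" using A that by simp
      finally show ?thesis using z by simp
    qed
    then have "v = 0\<^sub>v n" using v(1) by (intro eq_vecI) auto
    with v(2) show False by simp
  qed
  moreover have "(B * A) *\<^sub>v u = z \<cdot>\<^sub>v u"
  proof -
    have "(B * A) *\<^sub>v u = B *\<^sub>v (A *\<^sub>v u)" using A B u by simp
    also have "\<dots> = B *\<^sub>v (z \<cdot>\<^sub>v v)" by (simp only: Au)
    also have "\<dots> = z \<cdot>\<^sub>v u" unfolding u_def by (rule mult_mat_vec[OF B v(1)])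
    finally show ?thesis .
  qed
  ultimately show ?thesis
    using u A B unfolding eigenvalue_def eigenvector_def by auto
qed

lemma positive_semistable_mult_commute:
  fixes A B :: "real mat"
  assumes A: "A \<in> carrier_mat n m" and B: "B \<in> carrier_mat m n"
    and BA: "positive_semistable (B * A)"
  shows "positive_semistable (A * B)"
  unfolding positive_semistable_def
proof (intro conjI allI impI)
  show "square_mat (A * B)" using A B by simp
  fix z assume ev: "eigenvalue (map_mat complex_of_real (A * B)) z"
  show "Re z \<ge> 0"
  proof (cases "z = 0")
    case False
    have "map_mat complex_of_real (A * B) = map_mat complex_of_real A * map_mat complex_of_real B"
      "map_mat complex_of_real (B * A) = map_mat complex_of_real B * map_mat complex_of_real A"
      using of_real_hom.mat_hom_mult A B by blast+
    then have "eigenvalue (map_mat complex_of_real (B * A)) z"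
      using eigenvalue_mult_commute[of _ n m, OF _ _ _ False] ev A B by simp
    then show ?thesis using BA unfolding positive_semistable_def by blast
  qed simp
qed

lemma column_sparse_product_dominant:
  assumes A: "A \<in> carrier_mat n m" and st: "steady A (transpose_mat A)"
    and cols: "\<forall>j<m. card {i. i < n \<and> A $$ (i,j) \<noteq> 0} \<le> 2"
    and B: "B \<in> Q0 (transpose_mat A)"
  shows "\<exists>w. weighted_diag_dominant (transpose_mat (A * B)) n w"
  using exists_column_balancing[OF A st cols] transpose_product_weighted_diag_dominant[OF A B cols]
  by blast

lemma column_sparse_P0_positive_semistable:
  assumes A: "A \<in> carrier_mat n m" and st: "steady A (transpose_mat A)"
    and cols: "\<forall>j<m. card {i. i < n \<and> A $$ (i,j) \<noteq> 0} \<le> 2"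
    and B: "B \<in> Q0 (transpose_mat A)"
  shows "P0_matrix (A * B) \<and> P0_matrix (compound2 (A * B)) \<and> positive_semistable (A * B)"
proof -
  have AB: "A * B \<in> carrier_mat n n" using A Q0_transpose_carrier[OF A B] by simp
  obtain w where dom: "weighted_diag_dominant (transpose_mat (A * B)) n w"
    using column_sparse_product_dominant[OF A st cols B] by blast
  have "compound2 (A * B) \<in> carrier_mat (length (wedge_pairs n)) (length (wedge_pairs n))"
    using A unfolding compound2_def Let_def by simp
  then show ?thesis
    using P0_matrix_transpose[OF AB P0_matrix_if_weighted_diag_dominant[OF dom]]
      P0_matrix_transpose[OF _ P0_matrix_if_weighted_diag_dominant[OF compound2_weighted_diag_dominant[OF dom AB]]]
      positive_semistable_transpose[OF AB positive_semistable_if_weighted_diag_dominant[OF dom]]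
    by blast
qed

lemma row_sparse_positive_semistable:
  assumes A: "A \<in> carrier_mat n m" and st: "steady A (transpose_mat A)"
    and rows: "\<forall>i<n. card {j. j < m \<and> A $$ (i,j) \<noteq> 0} \<le> 2"
    and B: "B \<in> Q0 (transpose_mat A)"
  shows "positive_semistable (A * B)"
proof -
  have Bc: "B \<in> carrier_mat m n" by (rule Q0_transpose_carrier[OF A B])
  have "\<forall>i<n. card {j. j < m \<and> transpose_mat A $$ (j,i) \<noteq> 0} \<le> 2"
    using rows A by (auto cong: conj_cong)
  then obtain w where "weighted_diag_dominant (transpose_mat (transpose_mat A * transpose_mat B)) m w"
    using column_sparse_product_dominant[of "transpose_mat A" m n "transpose_mat B"]
      A steady_transpose[OF A st] Q0_transpose[OF A B] by auto
  moreover have "transpose_mat (transpose_mat A * transpose_mat B) = B * A"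
    using transpose_mult[of "transpose_mat A" m n "transpose_mat B" m] A Bc by simp
  ultimately show ?thesis
    using positive_semistable_mult_commute[OF A Bc positive_semistable_if_weighted_diag_dominant]
    by metis
qed

theorem theorem6p2:
  fixes A :: "real mat" and n m :: nat
  assumes "A \<in> carrier_mat n m" and "n \<ge> 2"
    and "steady A (transpose_mat A)"
  shows "((\<forall>j<m. card {i. i < n \<and> A $$ (i,j) \<noteq> 0} \<le> 2) \<longrightarrow>
            (\<forall>B \<in> Q0 (transpose_mat A).
               P0_matrix (A * B) \<and> P0_matrix (compound2 (A * B)) \<and> positive_semistable (A * B)))
       \<and> ((\<forall>i<n. card {j. j < m \<and> A $$ (i,j) \<noteq> 0} \<le> 2) \<longrightarrow>
            (\<forall>B \<in> Q0 (transpose_mat A). positive_semistable (A * B)))"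
  using assms(1,3) column_sparse_P0_positive_semistable row_sparse_positive_semistable by blast

end
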